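(* The graphs $\mathcal{F}_1$, $\mathcal{F}_2$ and $\mathcal{F}_3$ are non-Mengerian.
   Context: Graphs are finite, loopless, and may have parallel edges. A temporal graph is a pair $(G,\lambda)$ with $\lambda:E(G)\to\mathbb{Z}_{>0}$. A temporal $s,t$-path is an $s,t$-path $(s=v_1,e_1,\dots,e_{k-1},v_k=t)$ of $G$ (no repeated vertices) with $\lambda(e_1)\le\dots\le\lambda(e_{k-1})$. Two temporal $s,t$-paths are disjoint if they share no vertex other than $s,t$. For distinct non-adjacent $s,t$, a temporal $s,t$-vertex cut is a set $S\subseteq V(G)\setminus\{s,t\}$ such that $G-S$ (with $\lambda$ restricted) has no temporal $s,t$-path. $p_{G,\lambda}(s,t)$ is the maximum number of pairwise disjoint temporal $s,t$-paths and $c_{G,\lambda}(s,t)$ the minimum size of a temporal $s,t$-vertex cut. $G$ is Mengerian if $p_{G,\lambda}(s,t)=c_{G,\lambda}(s,t)$ for every $\lambda$ and every pair of distinct non-adjacent $s,t\in V(G)$. $\mathcal{F}_3$ is the gem: the simple graph on vertices $s,u,v,t,x$ with edges $su,uv,vt,xs,xu,xv,xt$. $\mathcal{F}_1$ is the graph on vertices $s,u,v,t,w,w'$ with simple edges $su,uv,vt,sw,wt,uw',w'v$ and exactly two parallel edges between $w$ and $w'$. $\mathcal{F}_2$ is the graph on vertices $s,u,v,t,w,w'$ with simple edges $su,uv,vt,sw,uw,w'v,w't$ and exactly two parallel edges between $w$ and $w'$. *)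

theory Defs
  imports Main
begin

text \<open>A finite loopless multigraph is given by a vertex set V, an edge set E
  (edges are abstract identifiers, so parallel edges are allowed) and a function
  ends assigning to each edge its two-element set of endpoints.\<close>

definition adjacent :: "'e set \<Rightarrow> ('e \<Rightarrow> 'v set) \<Rightarrow> 'v \<Rightarrow> 'v \<Rightarrow> bool" where
  "adjacent E ends s t \<longleftrightarrow> (\<exists>e\<in>E. ends e = {s, t})"

definition temporal_path ::
  "'v set \<Rightarrow> 'e set \<Rightarrow> ('e \<Rightarrow> 'v set) \<Rightarrow> ('e \<Rightarrow> nat) \<Rightarrow> 'v \<Rightarrow> 'v \<Rightarrow> 'v list \<Rightarrow> 'e list \<Rightarrow> bool" where
  "temporal_path V E ends lam s t vs es \<longleftrightarrow>
     vs \<noteq> [] \<and> length vs = length es + 1 \<and> distinct vs \<and> set vs \<subseteq> V \<and>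
     hd vs = s \<and> last vs = t \<and> set es \<subseteq> E \<and>
     (\<forall>i<length es. ends (es ! i) = {vs ! i, vs ! Suc i}) \<and>
     sorted (map lam es)"

definition temporal_paths ::
  "'v set \<Rightarrow> 'e set \<Rightarrow> ('e \<Rightarrow> 'v set) \<Rightarrow> ('e \<Rightarrow> nat) \<Rightarrow> 'v \<Rightarrow> 'v \<Rightarrow> ('v list \<times> 'e list) set" where
  "temporal_paths V E ends lam s t = {(vs, es). temporal_path V E ends lam s t vs es}"

definition p_temporal ::
  "'v set \<Rightarrow> 'e set \<Rightarrow> ('e \<Rightarrow> 'v set) \<Rightarrow> ('e \<Rightarrow> nat) \<Rightarrow> 'v \<Rightarrow> 'v \<Rightarrow> nat" where
  "p_temporal V E ends lam s t = Max {card P | P.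
     P \<subseteq> temporal_paths V E ends lam s t \<and>
     (\<forall>a\<in>P. \<forall>b\<in>P. a \<noteq> b \<longrightarrow> set (fst a) \<inter> set (fst b) \<subseteq> {s, t})}"

definition temporal_cut ::
  "'v set \<Rightarrow> 'e set \<Rightarrow> ('e \<Rightarrow> 'v set) \<Rightarrow> ('e \<Rightarrow> nat) \<Rightarrow> 'v \<Rightarrow> 'v \<Rightarrow> 'v set \<Rightarrow> bool" where
  "temporal_cut V E ends lam s t S \<longleftrightarrow> S \<subseteq> V - {s, t} \<and>
     (\<forall>(vs, es) \<in> temporal_paths V E ends lam s t. set vs \<inter> S \<noteq> {})"

definition c_temporal ::
  "'v set \<Rightarrow> 'e set \<Rightarrow> ('e \<Rightarrow> 'v set) \<Rightarrow> ('e \<Rightarrow> nat) \<Rightarrow> 'v \<Rightarrow> 'v \<Rightarrow> nat" where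
  "c_temporal V E ends lam s t = Min {card S | S. temporal_cut V E ends lam s t S}"

definition mengerian :: "'v set \<Rightarrow> 'e set \<Rightarrow> ('e \<Rightarrow> 'v set) \<Rightarrow> bool" where
  "mengerian V E ends \<longleftrightarrow>
     (\<forall>lam :: 'e \<Rightarrow> nat. (\<forall>e\<in>E. 0 < lam e) \<longrightarrow>
        (\<forall>s\<in>V. \<forall>t\<in>V. s \<noteq> t \<and> \<not> adjacent E ends s t \<longrightarrow>
           p_temporal V E ends lam s t = c_temporal V E ends lam s t))"

definition ends_of :: "(string \<times> string) list \<Rightarrow> nat \<Rightarrow> string set" where
  "ends_of L e = {fst (L ! e), snd (L ! e)}"

definition F1_list :: "(string \<times> string) list" where
  "F1_list = [(''s'',''u''), (''u'',''v''), (''v'',''t''), (''s'',''w''), (''w'',''t''),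
              (''u'',''w2''), (''w2'',''v''), (''w'',''w2''), (''w'',''w2'')]"

definition F2_list :: "(string \<times> string) list" where
  "F2_list = [(''s'',''u''), (''u'',''v''), (''v'',''t''), (''s'',''w''), (''u'',''w''),
              (''w2'',''v''), (''w2'',''t''), (''w'',''w2''), (''w'',''w2'')]"

definition F3_list :: "(string \<times> string) list" where
  "F3_list = [(''s'',''u''), (''u'',''v''), (''v'',''t''), (''x'',''s''), (''x'',''u''),
              (''x'',''v''), (''x'',''t'')]"

definition F12_vertices :: "string set" where
  "F12_vertices = {''s'', ''u'', ''v'', ''t'', ''w'', ''w2''}"

definition F3_vertices :: "string set" where
  "F3_vertices = {''s'', ''u'', ''v'', ''t'', ''x''}"

end

theory Submission
  imports Defs
begin

text \<open>Each graph gets a labelling with labels 1 and 2 under which every two temporal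
  \<open>s,t\<close>-paths share an inner vertex, so \<open>p(s,t) = 1\<close>, while every inner vertex is
  avoided by some temporal \<open>s,t\<close>-path, so \<open>c(s,t) = 2\<close>. The temporal \<open>s,t\<close>-paths are
  found exhaustively by a depth-first search that is proved complete once and for all.\<close>

definition other_end :: "(string \<times> string) list \<Rightarrow> nat \<Rightarrow> string \<Rightarrow> string" where
  "other_end L e v = (if fst (L ! e) = v then snd (L ! e) else fst (L ! e))"

lemma other_end_eq:
  assumes "ends_of L e = {v, w}" "v \<noteq> w"
  shows "other_end L e v = w"
  using assms by (auto simp: ends_of_def other_end_def doubleton_eq_iff)

fun temporal_path_search ::
  "(string \<times> string) list \<Rightarrow> (nat \<Rightarrow> nat) \<Rightarrow> string \<Rightarrow> nat \<Rightarrow> nat \<Rightarrow> string list \<Rightarrow> string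
     \<Rightarrow> string list list" where
  "temporal_path_search L lam t 0 lo visited v = (if v = t then [[v]] else [])"
| "temporal_path_search L lam t (Suc n) lo visited v = (if v = t then [[v]] else
     concat [map ((#) v) (temporal_path_search L lam t n (lam e) (v # visited) (other_end L e v)).
       e \<leftarrow> [0..<length L], v \<in> {fst (L ! e), snd (L ! e)}, lo \<le> lam e,
       other_end L e v \<notin> set (v # visited)])"

lemma temporal_path_search_complete:
  assumes "vs \<noteq> []" "length vs = length es + 1" "distinct vs" "hd vs = v" "last vs = t"
    "set es \<subseteq> {0..<length L}" "\<forall>i<length es. ends_of L (es ! i) = {vs ! i, vs ! Suc i}"
    "sorted (map lam es)" "\<forall>e\<in>set es. lo \<le> lam e" "length vs \<le> Suc n"
    "set visited \<inter> set vs = {}"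
  shows "vs \<in> set (temporal_path_search L lam t n lo visited v)"
  using assms
proof (induction vs arbitrary: es v lo visited n)
  case Nil
  then show ?case by simp
next
  case (Cons v' vs)
  then have v: "v' = v" by simp
  show ?case
  proof (cases vs)
    case Nil
    with Cons.prems show ?thesis by (cases n) auto
  next
    case (Cons w rest)
    from Cons.prems(2) \<open>vs = w # rest\<close> obtain e es' where es: "es = e # es'"
      by (cases es) auto
    from Cons.prems(10) \<open>vs = w # rest\<close> obtain m where n: "n = Suc m" by (cases n) auto
    have "t \<in> set vs" using Cons.prems(5) \<open>vs = w # rest\<close> by (auto split: if_splits)
    then have "v \<noteq> t" using Cons.prems(3) v by auto
    have "v \<noteq> w" using Cons.prems(3) v \<open>vs = w # rest\<close> by auto
    have ends_e: "ends_of L e = {v, w}"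
      using Cons.prems(7) es v \<open>vs = w # rest\<close> by fastforce
    then have "v \<in> {fst (L ! e), snd (L ! e)}" by (auto simp: ends_of_def)
    moreover have "other_end L e v = w" using ends_e \<open>v \<noteq> w\<close> by (rule other_end_eq)
    moreover have "w \<notin> set (v # visited)"
      using Cons.prems(3,11) v \<open>vs = w # rest\<close> \<open>v \<noteq> w\<close> by auto
    moreover have "lo \<le> lam e" "e < length L" using Cons.prems(6,9) es by auto
    moreover have "vs \<in> set (temporal_path_search L lam t m (lam e) (v # visited) w)"
    proof (rule Cons.IH[of es'])
      show "\<forall>i<length es'. ends_of L (es' ! i) = {vs ! i, vs ! Suc i}"
        using Cons.prems(7) es by (metis Suc_less_eq length_Cons nth_Cons_Suc)
      show "set (v # visited) \<inter> set vs = {}" using Cons.prems(3,11) v by auto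
    qed (use Cons.prems(2-6,8-10) es n \<open>vs = w # rest\<close> in auto)
    ultimately show ?thesis
      unfolding n v using \<open>v \<noteq> t\<close> by (auto intro!: bexI[of _ e])
  qed
qed

lemma temporal_path_in_search:
  assumes "temporal_path V {0..<length L} (ends_of L) lam s t vs es" "finite V" "card V \<le> Suc n"
  shows "vs \<in> set (temporal_path_search L lam t n 0 [] s)"
proof (rule temporal_path_search_complete)
  have "distinct vs" "set vs \<subseteq> V" using assms(1) by (auto simp: temporal_path_def)
  then have "length vs \<le> card V" by (metis assms(2) card_mono distinct_card)
  then show "length vs \<le> Suc n" using assms(3) by simp
qed (use assms(1) in \<open>auto simp: temporal_path_def\<close>)

lemma p_temporal_le_1:
  assumes "\<forall>a\<in>temporal_paths V E ends lam s t. \<forall>b\<in>temporal_paths V E ends lam s t.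
    \<not> set (fst a) \<inter> set (fst b) \<subseteq> {s, t}"
  shows "p_temporal V E ends lam s t \<le> 1"
proof -
  let ?sizes = "{card P | P. P \<subseteq> temporal_paths V E ends lam s t \<and>
     (\<forall>a\<in>P. \<forall>b\<in>P. a \<noteq> b \<longrightarrow> set (fst a) \<inter> set (fst b) \<subseteq> {s, t})}"
  have sizes: "?sizes \<subseteq> {0, 1}"
  proof
    fix k assume "k \<in> ?sizes"
    then obtain P where "k = card P" "P \<subseteq> temporal_paths V E ends lam s t"
      "\<forall>a\<in>P. \<forall>b\<in>P. a \<noteq> b \<longrightarrow> set (fst a) \<inter> set (fst b) \<subseteq> {s, t}" by blast
    with assms have "\<forall>a\<in>P. \<forall>b\<in>P. a = b" by blast
    then have "card P \<le> 1" by (cases "finite P") (auto simp: card_le_Suc0_iff_eq)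
    with \<open>k = card P\<close> show "k \<in> {0, 1}" by auto
  qed
  then have "finite ?sizes" by (rule finite_subset) simp
  moreover have "0 \<in> ?sizes" by force
  then have "?sizes \<noteq> {}" by blast
  ultimately have "Max ?sizes \<in> ?sizes" by (rule Max_in)
  with sizes have "Max ?sizes \<in> {0, 1}" by (rule subsetD)
  then show ?thesis unfolding p_temporal_def by auto
qed

lemma c_temporal_ge_2:
  assumes "finite V" "V - {s, t} \<noteq> {}"
    and inner: "\<forall>(vs, es)\<in>temporal_paths V E ends lam s t. \<not> set vs \<subseteq> {s, t}"
    and avoid: "\<forall>v\<in>V - {s, t}. \<exists>(vs, es)\<in>temporal_paths V E ends lam s t. v \<notin> set vs"
  shows "2 \<le> c_temporal V E ends lam s t"
proof -
  let ?sizes = "{card S | S. temporal_cut V E ends lam s t S}"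
  have "?sizes \<subseteq> card ` Pow V" unfolding temporal_cut_def by auto
  then have "finite ?sizes" using assms(1) by (meson finite_Pow_iff finite_imageI finite_subset)
  have "set vs \<inter> (V - {s, t}) \<noteq> {}" if "(vs, es) \<in> temporal_paths V E ends lam s t" for vs es
  proof -
    have "set vs \<subseteq> V" using that by (simp add: temporal_paths_def temporal_path_def)
    with inner that show ?thesis by blast
  qed
  then have "temporal_cut V E ends lam s t (V - {s, t})"
    unfolding temporal_cut_def by blast
  then have "?sizes \<noteq> {}" by blast
  moreover have "2 \<le> card S" if cut: "temporal_cut V E ends lam s t S" for S
  proof (rule ccontr)
    assume "\<not> 2 \<le> card S"
    then have "card S \<le> 1" by simp
    moreover have "S \<subseteq> V - {s, t}" using cut unfolding temporal_cut_def by blast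
    moreover from this have "finite S" using assms(1) finite_subset by blast
    ultimately obtain v where "v \<in> V - {s, t}" "S \<subseteq> {v}"
      using assms(2) by (metis card_le_Suc0_iff_eq One_nat_def subset_eq singletonI equals0I)
    with avoid cut show False unfolding temporal_cut_def by fast
  qed
  ultimately show ?thesis
    unfolding c_temporal_def using \<open>finite ?sizes\<close> by (auto simp: Min_ge_iff)
qed

lemma not_mengerian_if_temporal_paths_pairwise_meet:
  assumes "finite V" "card V \<le> Suc n" "\<forall>e\<in>{0..<length L}. 0 < lam e"
    and "s \<in> V" "t \<in> V" "s \<noteq> t" "\<not> adjacent {0..<length L} (ends_of L) s t" "V - {s, t} \<noteq> {}"
    and meet: "\<forall>a\<in>set (temporal_path_search L lam t n 0 [] s).
      \<forall>b\<in>set (temporal_path_search L lam t n 0 [] s). \<not> set a \<inter> set b \<subseteq> {s, t}"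
    and avoid: "\<forall>v\<in>V - {s, t}. \<exists>vs es.
      temporal_path V {0..<length L} (ends_of L) lam s t vs es \<and> v \<notin> set vs"
  shows "\<not> mengerian V {0..<length L} (ends_of L)"
proof -
  let ?paths = "temporal_paths V {0..<length L} (ends_of L) lam s t"
  have found: "fst a \<in> set (temporal_path_search L lam t n 0 [] s)" if "a \<in> ?paths" for a
    using that temporal_path_in_search[OF _ assms(1,2)] by (auto simp: temporal_paths_def)
  have "p_temporal V {0..<length L} (ends_of L) lam s t \<le> 1"
    using meet found by (intro p_temporal_le_1) blast
  moreover have "2 \<le> c_temporal V {0..<length L} (ends_of L) lam s t"
  proof (rule c_temporal_ge_2)
    show "\<forall>(vs, es)\<in>?paths. \<not> set vs \<subseteq> {s, t}" using meet found by fastforce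
    show "\<forall>v\<in>V - {s, t}. \<exists>(vs, es)\<in>?paths. v \<notin> set vs"
      using avoid by (fastforce simp: temporal_paths_def)
  qed (use assms(1,8) in auto)
  ultimately show ?thesis using assms(3-7) unfolding mengerian_def by fastforce
qed

text \<open>The labellings list the labels in the order of the edge lists; in \<open>\<F>\<^sub>1\<close> and
  \<open>\<F>\<^sub>2\<close> the two parallel \<open>ww'\<close>-edges get labels 1 and 2.\<close>

definition lam_F1 :: "nat \<Rightarrow> nat" where "lam_F1 e = [1, 1, 2, 2, 1, 1, 2, 1, 2] ! e"

lemma F1_not_mengerian: "\<not> mengerian F12_vertices {0..<length F1_list} (ends_of F1_list)"
proof (rule not_mengerian_if_temporal_paths_pairwise_meet
    [where n = 5 and lam = lam_F1 and s = "''s''" and t = "''t''"])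
  let ?path = "temporal_path F12_vertices {0..<length F1_list} (ends_of F1_list) lam_F1 ''s'' ''t''"
  have "?path [''s'', ''u'', ''v'', ''t''] [0, 1, 2]"
    "?path [''s'', ''u'', ''w2'', ''w'', ''t''] [0, 5, 7, 4]"
    "?path [''s'', ''w'', ''w2'', ''v'', ''t''] [3, 8, 6, 2]"
    by (simp_all add: temporal_path_def F12_vertices_def F1_list_def ends_of_def lam_F1_def
        less_Suc_eq insert_commute)
  then show "\<forall>v\<in>F12_vertices - {''s'', ''t''}. \<exists>vs es. ?path vs es \<and> v \<notin> set vs"
    unfolding F12_vertices_def by fastforce
qed (auto simp: F12_vertices_def F1_list_def lam_F1_def other_end_def adjacent_def ends_of_def
    doubleton_eq_iff less_Suc_eq upt_rec numeral_eq_Suc)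

definition lam_F2 :: "nat \<Rightarrow> nat" where "lam_F2 e = [1, 1, 2, 2, 1, 2, 1, 1, 2] ! e"

lemma F2_not_mengerian: "\<not> mengerian F12_vertices {0..<length F2_list} (ends_of F2_list)"
proof (rule not_mengerian_if_temporal_paths_pairwise_meet
    [where n = 5 and lam = lam_F2 and s = "''s''" and t = "''t''"])
  let ?path = "temporal_path F12_vertices {0..<length F2_list} (ends_of F2_list) lam_F2 ''s'' ''t''"
  have "?path [''s'', ''u'', ''v'', ''t''] [0, 1, 2]"
    "?path [''s'', ''u'', ''w'', ''w2'', ''t''] [0, 4, 7, 6]"
    "?path [''s'', ''w'', ''w2'', ''v'', ''t''] [3, 8, 5, 2]"
    by (simp_all add: temporal_path_def F12_vertices_def F2_list_def ends_of_def lam_F2_def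
        less_Suc_eq insert_commute)
  then show "\<forall>v\<in>F12_vertices - {''s'', ''t''}. \<exists>vs es. ?path vs es \<and> v \<notin> set vs"
    unfolding F12_vertices_def by fastforce
qed (auto simp: F12_vertices_def F2_list_def lam_F2_def other_end_def adjacent_def ends_of_def
    doubleton_eq_iff less_Suc_eq upt_rec numeral_eq_Suc)

definition lam_F3 :: "nat \<Rightarrow> nat" where "lam_F3 e = [1, 1, 2, 2, 1, 2, 1] ! e"

lemma F3_not_mengerian: "\<not> mengerian F3_vertices {0..<length F3_list} (ends_of F3_list)"
proof (rule not_mengerian_if_temporal_paths_pairwise_meet
    [where n = 4 and lam = lam_F3 and s = "''s''" and t = "''t''"])
  let ?path = "temporal_path F3_vertices {0..<length F3_list} (ends_of F3_list) lam_F3 ''s'' ''t''"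
  have "?path [''s'', ''u'', ''v'', ''t''] [0, 1, 2]"
    "?path [''s'', ''u'', ''x'', ''t''] [0, 4, 6]"
    "?path [''s'', ''x'', ''v'', ''t''] [3, 5, 2]"
    by (simp_all add: temporal_path_def F3_vertices_def F3_list_def ends_of_def lam_F3_def
        less_Suc_eq insert_commute)
  then show "\<forall>v\<in>F3_vertices - {''s'', ''t''}. \<exists>vs es. ?path vs es \<and> v \<notin> set vs"
    unfolding F3_vertices_def by fastforce
qed (auto simp: F3_vertices_def F3_list_def lam_F3_def other_end_def adjacent_def ends_of_def
    doubleton_eq_iff less_Suc_eq upt_rec numeral_eq_Suc)

theorem lemma1:
  shows "\<not> mengerian F12_vertices {0..<length F1_list} (ends_of F1_list) \<and>
         \<not> mengerian F12_vertices {0..<length F2_list} (ends_of F2_list) \<and>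
         \<not> mengerian F3_vertices {0..<length F3_list} (ends_of F3_list)"
  using F1_not_mengerian F2_not_mengerian F3_not_mengerian by blast

end
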